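(* Let $R$ be a uniform $L$-layered $1$-semifield$^\dagger$ and $a\in R$. Let $f=\sum_{i=0}^m (a^i)^{[\ell_i]}\lambda^{m-i}$ and $g=\sum_{j=0}^n (a^j)^{[k_j]}\lambda^{n-j}$ (so $f$ and $g$ are both $a$-primary). Then $|\Re(f,g)|$ is the element of $\mathcal{G}$-value $a^{mn}$ whose layer $\ell'$ is the permanent of the $(m+n)\times(m+n)$ matrix of the layers of the entries of the Sylvester matrix $\Re(f,g)$.
   Context: Concretely, $R=R(L,\mathcal{G})$ with $L$ a totally ordered commutative semiring$^\dagger$ (semiring without necessarily a zero; for layers of zero entries one adjoins $0$ to $L$) and $\mathcal{G}$ a totally ordered abelian group; elements are $x^{[\ell]}$ ($x\in\mathcal{G}$, layer $\ell$), with $x^{[k]}y^{[\ell]}=(xy)^{[k\ell]}$ and $x^{[k]}+y^{[\ell]}$ equal to $x^{[k]}$ if $x>y$, $y^{[\ell]}$ if $x<y$, $x^{[k+\ell]}$ if $x=y$; $(c)^{[\ell]}$ denotes the element with the $\mathcal{G}$-value of $c$ and layer $\ell$. A zero element $\mathbb{0}_R$ (additive identity, multiplicatively absorbing, layer $0$) is formally adjoined. The layered permanent of an $N\times N$ matrix $A=(a_{ij})$ is $|A|=\sum_{\sigma\in S_N}a_{1,\sigma(1)}\cdots a_{N,\sigma(N)}$. For $f=\sum_{i=0}^m\alpha_i\lambda^i$, $A_n(f)$ is the $n\times(m+n)$ matrix whose $r$-th row is $(\mathbb{0},\dots,\mathbb{0},\alpha_0,\alpha_1,\dots,\alpha_m,\mathbb{0},\dots,\mathbb{0})$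 with $r-1$ leading zeros; for $g$ of degree $n\ge1$ the Sylvester matrix is $\Re(f,g)=\binom{A_n(f)}{A_m(g)}$ and the resultant is $|\Re(f,g)|$ (for constant $f=\alpha_0$ it is $\alpha_0^n$, and symmetrically). The permanent of the layer matrix is computed in $L$ (with ordinary sums and products). *)

theory Defs
  imports "HOL-Combinatorics.Permutations"
begin

text \<open>The totally ordered abelian group G is written
additively (so the paper's x y is x + y and a^i is gpow a i); LZero is the formally
adjoined zero, and Lay x l is the element x^[l].\<close>

datatype ('g, 'l) layered = LZero | Lay 'g 'l

fun gpow :: "'g::monoid_add \<Rightarrow> nat \<Rightarrow> 'g" where
  "gpow a 0 = 0"
| "gpow a (Suc i) = a + gpow a i"

instantiation layered :: ("{ab_semigroup_add,linorder}", ab_semigroup_add) comm_monoid_add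
begin
definition zero_layered where "0 = LZero"
fun plus_layered :: "('a,'b) layered \<Rightarrow> ('a,'b) layered \<Rightarrow> ('a,'b) layered" where
  "plus_layered LZero y = y"
| "plus_layered (Lay x k) LZero = Lay x k"
| "plus_layered (Lay x k) (Lay y l) =
     (if y < x then Lay x k else if x < y then Lay y l else Lay x (k + l))"
instance
proof
  fix a b c :: "('a,'b) layered"
  show "a + b + c = a + (b + c)"
    by (cases a; cases b; cases c) (auto simp: add.assoc)
  show "a + b = b + a"
    by (cases a; cases b) (auto simp: add.commute)
  show "0 + a = a" by (simp add: zero_layered_def)
qed
end

instantiation layered :: ("{comm_monoid_add,linorder}", comm_monoid_mult) comm_monoid_mult
begin
definition one_layered where "1 = Lay 0 1"
fun times_layered :: "('a,'b) layered \<Rightarrow> ('a,'b) layered \<Rightarrow> ('a,'b) layered" where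
  "times_layered LZero y = LZero"
| "times_layered (Lay x k) LZero = LZero"
| "times_layered (Lay x k) (Lay y l) = Lay (x + y) (k * l)"
instance
proof
  fix a b c :: "('a,'b) layered"
  show "a * b * c = a * (b * c)"
    by (cases a; cases b; cases c) (auto simp: add.assoc mult.assoc)
  show "a * b = b * a"
    by (cases a; cases b) (auto simp: add.commute mult.commute)
  show "1 * a = a" by (cases a) (simp_all add: one_layered_def)
qed
end

text \<open>L with a zero adjoined (Zr), used for the layers of zero entries.\<close>

datatype 'l zadj = Zr | NZ 'l

instantiation zadj :: (ab_semigroup_add) comm_monoid_add
begin
definition zero_zadj where "0 = Zr"
fun plus_zadj :: "'a zadj \<Rightarrow> 'a zadj \<Rightarrow> 'a zadj" where
  "plus_zadj Zr y = y"
| "plus_zadj (NZ k) Zr = NZ k"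
| "plus_zadj (NZ k) (NZ l) = NZ (k + l)"
instance
proof
  fix a b c :: "'a zadj"
  show "a + b + c = a + (b + c)"
    by (cases a; cases b; cases c) (auto simp: add.assoc)
  show "a + b = b + a"
    by (cases a; cases b) (auto simp: add.commute)
  show "0 + a = a" by (simp add: zero_zadj_def)
qed
end

instantiation zadj :: (comm_monoid_mult) comm_monoid_mult
begin
definition one_zadj where "1 = NZ 1"
fun times_zadj :: "'a zadj \<Rightarrow> 'a zadj \<Rightarrow> 'a zadj" where
  "times_zadj Zr y = Zr"
| "times_zadj (NZ k) Zr = Zr"
| "times_zadj (NZ k) (NZ l) = NZ (k * l)"
instance
proof
  fix a b c :: "'a zadj"
  show "a * b * c = a * (b * c)"
    by (cases a; cases b; cases c) (auto simp: mult.assoc)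
  show "a * b = b * a"
    by (cases a; cases b) (auto simp: mult.commute)
  show "1 * a = a" by (cases a) (simp_all add: one_zadj_def)
qed
end

fun layer :: "('g, 'l) layered \<Rightarrow> 'l zadj" where
  "layer LZero = Zr"
| "layer (Lay x l) = NZ l"

definition permanent :: "(nat \<Rightarrow> nat \<Rightarrow> 'a::{comm_monoid_add,comm_monoid_mult}) \<Rightarrow> nat \<Rightarrow> 'a" where
  "permanent A N = (\<Sum>\<sigma> | \<sigma> permutes {..<N}. \<Prod>i<N. A i (\<sigma> i))"

text \<open>Sylvester matrix of f = sum_{i\<le>m} alpha_i lambda^i and g = sum_{j\<le>n} beta_j lambda^j,
0-indexed: the first n rows are the shifted rows of A_n(f), the last m rows those of A_m(g).\<close>
definition sylvester ::
  "nat \<Rightarrow> (nat \<Rightarrow> 'a::zero) \<Rightarrow> nat \<Rightarrow> (nat \<Rightarrow> 'a) \<Rightarrow> nat \<Rightarrow> nat \<Rightarrow> 'a" where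
  "sylvester m \<alpha> n \<beta> i j =
     (if i < n then (if i \<le> j \<and> j - i \<le> m then \<alpha> (j - i) else 0)
      else (if i - n \<le> j \<and> j - (i - n) \<le> n then \<beta> (j - (i - n)) else 0))"

definition resultant ::
  "nat \<Rightarrow> (nat \<Rightarrow> 'a::{comm_monoid_add,comm_monoid_mult}) \<Rightarrow> nat \<Rightarrow> (nat \<Rightarrow> 'a) \<Rightarrow> 'a" where
  "resultant m \<alpha> n \<beta> = permanent (sylvester m \<alpha> n \<beta>) (m + n)"

end

theory Submission
  imports Defs
begin

text \<open>Every nonzero entry in row i and column j of the Sylvester matrix of two a-primary
polynomials has value a^(r i) / a^j, where r i = m + i in the first n rows and r i = i in the
others. Hence every nonzero term of the permanent has the same value
a^(\<Sum>i. r i - i) = a^(m n), all terms are added at equal value, and the layers add up to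
the permanent of the layer matrix. That permanent is nonzero because the diagonal entries
of the Sylvester matrix are nonzero and a sum in L with zero adjoined only vanishes
if every summand does.\<close>

definition with_layer :: "'g \<Rightarrow> 'l zadj \<Rightarrow> ('g, 'l) layered" where
  "with_layer v z = (case z of Zr \<Rightarrow> LZero | NZ l \<Rightarrow> Lay v l)"

lemma with_layer_simps [simp]:
  "with_layer v Zr = LZero"
  "with_layer v (NZ l) = Lay v l"
  by (simp_all add: with_layer_def)

lemma with_layer_mult:
  fixes u v :: "'g::{comm_monoid_add,linorder}" and x y :: "'l::comm_monoid_mult zadj"
  shows "with_layer u x * with_layer v y = with_layer (u + v) (x * y)"
  by (cases x; cases y) simp_all

lemma with_layer_add:
  fixes v :: "'g::{ab_semigroup_add,linorder}" and x y :: "'l::ab_semigroup_add zadj"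
  shows "with_layer v x + with_layer v y = with_layer v (x + y)"
  by (cases x; cases y) simp_all

lemma prod_with_layer:
  fixes v :: "'i \<Rightarrow> 'g::{comm_monoid_add,linorder}" and z :: "'i \<Rightarrow> 'l::comm_monoid_mult zadj"
  assumes "finite I"
  shows "(\<Prod>i\<in>I. with_layer (v i) (z i)) = with_layer (\<Sum>i\<in>I. v i) (\<Prod>i\<in>I. z i)"
  using assms
  by (induction I rule: finite_induct)
     (simp_all add: with_layer_mult one_layered_def one_zadj_def)

lemma sum_with_layer:
  fixes v :: "'g::{comm_monoid_add,linorder}" and z :: "'i \<Rightarrow> 'l::ab_semigroup_add zadj"
  assumes "finite I"
  shows "(\<Sum>i\<in>I. with_layer v (z i)) = with_layer v (\<Sum>i\<in>I. z i)"
  using assms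
  by (induction I rule: finite_induct)
     (simp_all add: with_layer_add zero_layered_def zero_zadj_def)

lemma sum_zadj_eq_Zr_iff:
  fixes z :: "'i \<Rightarrow> 'l::ab_semigroup_add zadj"
  assumes "finite I"
  shows "(\<Sum>i\<in>I. z i) = Zr \<longleftrightarrow> (\<forall>i\<in>I. z i = Zr)"
  using assms
proof (induction I rule: finite_induct)
  case (insert x I)
  then show ?case by (cases "z x"; cases "\<Sum>i\<in>I. z i") auto
qed (simp add: zero_zadj_def)

lemma prod_zadj_eq_Zr_iff:
  fixes z :: "'i \<Rightarrow> 'l::comm_monoid_mult zadj"
  assumes "finite I"
  shows "(\<Prod>i\<in>I. z i) = Zr \<longleftrightarrow> (\<exists>i\<in>I. z i = Zr)"
  using assms
proof (induction I rule: finite_induct)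
  case (insert x I)
  then show ?case by (cases "z x"; cases "\<Prod>i\<in>I. z i") auto
qed (simp add: one_zadj_def)

lemma permanent_zadj_nonzero:
  fixes B :: "nat \<Rightarrow> nat \<Rightarrow> 'l::{ab_semigroup_add,comm_monoid_mult} zadj"
  assumes "\<And>i. i < N \<Longrightarrow> B i i \<noteq> Zr"
  shows "permanent B N \<noteq> Zr"
proof -
  have "(\<Prod>i<N. B i (id i)) \<noteq> Zr"
    using assms by (simp add: prod_zadj_eq_Zr_iff)
  then show ?thesis
    unfolding permanent_def
    by (subst sum_zadj_eq_Zr_iff) (auto simp: finite_permutations intro: permutes_id)
qed

text \<open>Zero entries satisfy the hypothesis for every r and c.\<close>

lemma permanent_row_column_valued:
  fixes A :: "nat \<Rightarrow> nat \<Rightarrow> ('g::{ab_group_add,linorder}, 'l::{ab_semigroup_add,comm_monoid_mult}) layered"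
  assumes entry: "\<And>i j. i < N \<Longrightarrow> j < N \<Longrightarrow> A i j = with_layer (r i - c j) (layer (A i j))"
  shows "permanent A N = with_layer (\<Sum>i<N. r i - c i) (permanent (\<lambda>i j. layer (A i j)) N)"
proof -
  have permanent_term: "(\<Prod>i<N. A i (\<sigma> i)) = with_layer (\<Sum>i<N. r i - c i) (\<Prod>i<N. layer (A i (\<sigma> i)))"
    if \<sigma>: "\<sigma> permutes {..<N}" for \<sigma>
  proof -
    have "(\<Prod>i<N. A i (\<sigma> i)) = (\<Prod>i<N. with_layer (r i - c (\<sigma> i)) (layer (A i (\<sigma> i))))"
      using entry permutes_in_image[OF \<sigma>] by (intro prod.cong) auto
    also have "\<dots> = with_layer (\<Sum>i<N. r i - c (\<sigma> i)) (\<Prod>i<N. layer (A i (\<sigma> i)))"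
      by (simp add: prod_with_layer)
    also have "(\<Sum>i<N. r i - c (\<sigma> i)) = (\<Sum>i<N. r i - c i)"
      using sum.permute[OF \<sigma>, of c] by (simp add: sum_subtractf comp_def)
    finally show ?thesis .
  qed
  have "permanent A N = (\<Sum>\<sigma> | \<sigma> permutes {..<N}.
          with_layer (\<Sum>i<N. r i - c i) (\<Prod>i<N. layer (A i (\<sigma> i))))"
    unfolding permanent_def by (intro sum.cong) (simp_all add: permanent_term)
  then show ?thesis
    by (simp add: sum_with_layer finite_permutations permanent_def)
qed

lemma gpow_add: "gpow (a::'g::monoid_add) (i + j) = gpow a i + gpow a j"
  by (induction i) (simp_all add: add.assoc)

lemma gpow_diff:
  fixes a :: "'g::ab_group_add"
  assumes "j \<le> i"
  shows "gpow a (i - j) = gpow a i - gpow a j"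
  using gpow_add[of a "i - j" j] assms by simp

lemma gpow_mult: "gpow (a::'g::comm_monoid_add) (m * n) = (\<Sum>i<n. gpow a m)"
  by (induction n) (simp_all add: gpow_add add.commute)

lemma sylvester_primary_entry:
  fixes a :: "'g::{ab_group_add,linorder}"
  assumes f: "\<And>i. i \<le> m \<Longrightarrow> \<alpha> (m - i) = Lay (gpow a i) (l i)"
    and g: "\<And>j. j \<le> n \<Longrightarrow> \<beta> (n - j) = Lay (gpow a j) (k j)"
  shows "sylvester m \<alpha> n \<beta> i j =
           with_layer (gpow a (if i < n then m + i else i) - gpow a j) (layer (sylvester m \<alpha> n \<beta> i j))"
proof (cases "i < n")
  case True
  have "\<alpha> t = Lay (gpow a (m - t)) (l (m - t))" if "t \<le> m" for t
    using f[of "m - t"] that by simp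
  then show ?thesis
    using True by (auto simp: sylvester_def zero_layered_def gpow_diff[symmetric]
                        intro: arg_cong[where f = "gpow a"])
next
  case False
  have "\<beta> t = Lay (gpow a (n - t)) (k (n - t))" if "t \<le> n" for t
    using g[of "n - t"] that by simp
  then show ?thesis
    using False by (auto simp: sylvester_def zero_layered_def gpow_diff[symmetric]
                         intro: arg_cong[where f = "gpow a"])
qed

lemma sylvester_primary_value:
  fixes a :: "'g::ab_group_add"
  shows "(\<Sum>i<m + n. gpow a (if i < n then m + i else i) - gpow a i) = gpow a (m * n)"
proof -
  have "(\<Sum>i<m + n. gpow a (if i < n then m + i else i) - gpow a i) = (\<Sum>i<m + n. if i < n then gpow a m else 0)"
    by (intro sum.cong) (simp_all add: gpow_add)
  also have "\<dots> = (\<Sum>i<n. gpow a m)"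
  proof -
    have "{i. i < m + n \<and> i < n} = {..<n}" by auto
    then show ?thesis by (simp add: sum.If_cases lessThan_def Collect_conj_eq[symmetric])
  qed
  finally show ?thesis by (simp add: gpow_mult)
qed

theorem lemma8p5:
  fixes a :: "'g::linordered_ab_group_add"
    and l k :: "nat \<Rightarrow> 'l::{comm_semiring, comm_monoid_mult, linorder}"
    and \<alpha> \<beta> :: "nat \<Rightarrow> ('g, 'l) layered"
    and m n :: nat
  assumes f: "\<And>i. i \<le> m \<Longrightarrow> \<alpha> (m - i) = Lay (gpow a i) (l i)"
    and g: "\<And>j. j \<le> n \<Longrightarrow> \<beta> (n - j) = Lay (gpow a j) (k j)"
  shows "\<exists>l'. permanent (\<lambda>i j. layer (sylvester m \<alpha> n \<beta> i j)) (m + n) = NZ l'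
           \<and> resultant m \<alpha> n \<beta> = Lay (gpow a (m * n)) l'"
proof -
  define P where "P = permanent (\<lambda>i j. layer (sylvester m \<alpha> n \<beta> i j)) (m + n)"
  have resultant: "resultant m \<alpha> n \<beta> = with_layer (gpow a (m * n)) P"
    unfolding resultant_def P_def sylvester_primary_value[symmetric]
    by (rule permanent_row_column_valued) (rule sylvester_primary_entry[OF f g])
  have "P \<noteq> Zr"
    unfolding P_def
  proof (rule permanent_zadj_nonzero)
    fix i assume "i < m + n"
    then show "layer (sylvester m \<alpha> n \<beta> i i) \<noteq> Zr"
      using f[of m] g[of 0] by (auto simp: sylvester_def)
  qed
  then obtain l' where "P = NZ l'"
    by (cases P) auto
  with resultant show ?thesis
    unfolding P_def by simp
qed

end
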